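(* Let $k\ge3$ be odd, $0\le p\le p_k^\star$ and $\eta>0$. There exists $\varepsilon'=\varepsilon'(p,k,\eta)>0$ such that for every finite graph $G=(V,E)$ without isolated vertices, every round $t$, every configuration $\bar{\mathbf x}$ with $\phi^{(t)}_{\max}\le\varphi^-_{p,k}-\eta$, and every $u\in V$, under the $(k,p,\mathcal B)$-Edge-Majority dynamics, $$\mathbb E\big[\phi_u^{(t+1)}\mid\mathbf X^{(t)}=\bar{\mathbf x}\big]\le(1-\varepsilon')\,\phi^{(t)}_{\max}.$$
   Context: $N(u)$ neighbourhood of $u$, $\delta_u=|N(u)|$. States in $\{\mathcal R,\mathcal B\}$; $\mathbf X^{(t)}$ is the configuration at round $t$, $R^{(t)}$ the $\mathcal R$ nodes, $\phi_u^{(t)}=|N(u)\cap R^{(t)}|/\delta_u$, $\phi^{(t)}_{\max}=\max_u\phi_u^{(t)}$. $(k,p,\mathcal B)$-Edge-Majority: in each round every node $u$ independently samples $k$ neighbours uniformly with replacement; for each sampled $v$, independently, $u$ sees $v$ as $\mathcal B$ with probability $p$ and otherwise sees $v$'s true current state; $u$'s next state is the state seen more often. $F_{p,k}(x)=\Pr[\mathrm{Bin}(k,(1-p)x)\ge(k+1)/2]$. $p_k^\star\in[1/9,1/2)$ is the (unique) value such that for $0\le p<p_k^\star$, $F_{p,k}(x)=x$ on $[0,1]$ has exactly three solutions $0<\varphi^-_{p,k}<\varphi^+_{p,k}$; for $p=p_k^\star$ exactly two, $0$ and $\varphi_{p,k}$, and then $\varphi^-_{p,k}:=\varphi_{p,k}$;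 for $p>p_k^\star$ only $0$. *)

theory Defs
  imports "HOL-Probability.Probability"
begin

text \<open>Graph: finite vertex set V, symmetric irreflexive adjacency relation E.
  Configurations: functions 'a => bool, True = state R, False = state B.\<close>

definition nbhd :: "'a set \<Rightarrow> ('a \<Rightarrow> 'a \<Rightarrow> bool) \<Rightarrow> 'a \<Rightarrow> 'a set" where
  "nbhd V E u = {v \<in> V. E u v}"

definition simple_graph :: "'a set \<Rightarrow> ('a \<Rightarrow> 'a \<Rightarrow> bool) \<Rightarrow> bool" where
  "simple_graph V E \<longleftrightarrow> finite V \<and> (\<forall>u v. E u v \<longrightarrow> E v u) \<and> (\<forall>u. \<not> E u u)"

definition no_isolated :: "'a set \<Rightarrow> ('a \<Rightarrow> 'a \<Rightarrow> bool) \<Rightarrow> bool" where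
  "no_isolated V E \<longleftrightarrow> (\<forall>u\<in>V. nbhd V E u \<noteq> {})"

definition phi :: "'a set \<Rightarrow> ('a \<Rightarrow> 'a \<Rightarrow> bool) \<Rightarrow> ('a \<Rightarrow> bool) \<Rightarrow> 'a \<Rightarrow> real" where
  "phi V E x u = real (card {v \<in> nbhd V E u. x v}) / real (card (nbhd V E u))"

definition phi_max :: "'a set \<Rightarrow> ('a \<Rightarrow> 'a \<Rightarrow> bool) \<Rightarrow> ('a \<Rightarrow> bool) \<Rightarrow> real" where
  "phi_max V E x = Max ((\<lambda>u. phi V E x u) ` V)"

primrec seen_R :: "'a set \<Rightarrow> ('a \<Rightarrow> 'a \<Rightarrow> bool) \<Rightarrow> real \<Rightarrow> ('a \<Rightarrow> bool) \<Rightarrow> 'a \<Rightarrow> nat \<Rightarrow> nat pmf" where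
  "seen_R V E p x u 0 = return_pmf 0"
| "seen_R V E p x u (Suc n) =
     do { c \<leftarrow> seen_R V E p x u n;
          v \<leftarrow> pmf_of_set (nbhd V E u);
          noisy \<leftarrow> bernoulli_pmf p;
          return_pmf (if \<not> noisy \<and> x v then Suc c else c) }"

definition node_update :: "'a set \<Rightarrow> ('a \<Rightarrow> 'a \<Rightarrow> bool) \<Rightarrow> nat \<Rightarrow> real \<Rightarrow> ('a \<Rightarrow> bool) \<Rightarrow> 'a \<Rightarrow> bool pmf" where
  "node_update V E k p x u = map_pmf (\<lambda>c. k - c < c) (seen_R V E p x u k)"

definition edge_majority_step :: "'a set \<Rightarrow> ('a \<Rightarrow> 'a \<Rightarrow> bool) \<Rightarrow> nat \<Rightarrow> real \<Rightarrow> ('a \<Rightarrow> bool) \<Rightarrow> ('a \<Rightarrow> bool) pmf" where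
  "edge_majority_step V E k p x = Pi_pmf V False (node_update V E k p x)"

definition F :: "real \<Rightarrow> nat \<Rightarrow> real \<Rightarrow> real" where
  "F p k x = (let q = (1 - p) * x in
     \<Sum>m\<in>{m. m \<le> k \<and> real m \<ge> (real k + 1) / 2}. real (k choose m) * q ^ m * (1 - q) ^ (k - m))"

definition fixpts :: "real \<Rightarrow> nat \<Rightarrow> real set" where
  "fixpts p k = {x \<in> {0..1}. F p k x = x}"

definition p_star :: "nat \<Rightarrow> real" where
  "p_star k = (THE p. 1/9 \<le> p \<and> p < 1/2
      \<and> (\<forall>q. 0 \<le> q \<and> q < p \<longrightarrow> card (fixpts q k) = 3)
      \<and> card (fixpts p k) = 2
      \<and> (\<forall>q. p < q \<and> q \<le> 1 \<longrightarrow> fixpts q k = {0}))"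

definition phi_minus :: "real \<Rightarrow> nat \<Rightarrow> real" where
  "phi_minus p k = Min (fixpts p k - {0})"

end

(*
  Given the configuration, every node v updates independently, and each of its k samples is
  seen as R with probability (1 - p) phi_v; so v becomes R with probability F(phi_v), and the
  expected next fraction of R neighbours of u is the average of F(phi_v) over v in N(u).
  Since k >= 3, F(y) = y Q(y) for a polynomial Q with Q(0) = 0, and the positive fixed points
  of F are the roots of Q = 1 in (0, 1]. Hence Q < 1 on [0, phi^- - eta] by the intermediate
  value theorem, and Q <= 1 - eps there by compactness, giving
  F(phi_v) <= (1 - eps) phi_v <= (1 - eps) phi_max.
*)
theory Submission
  imports Defs "HOL-Computational_Algebra.Polynomial"
begin

lemma majority_indices: "{m. m \<le> k \<and> real m \<ge> (real k + 1) / 2} = {m \<in> {..k}. k - m < m}"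
  by auto

lemma F_as_binomial_expectation:
  assumes "(1 - p) * y \<in> {0..1}"
  shows "F p k y = measure_pmf.expectation (binomial_pmf k ((1 - p) * y)) (\<lambda>c. of_bool (k - c < c))"
  unfolding F_def Let_def majority_indices expectation_binomial_pmf'[OF assms]
    sum.inter_filter[OF finite_atMost]
  by (intro sum.cong refl) simp

lemma F_full_noise: "F 1 k y = 0"
  unfolding F_def Let_def by (intro sum.neutral) auto

definition F_quotient :: "real \<Rightarrow> nat \<Rightarrow> real poly" where
  "F_quotient p k = (\<Sum>m\<le>k. if k - m < m
     then smult (real (k choose m) * (1 - p) ^ m) (monom 1 (m - 1) * [:1, p - 1:] ^ (k - m))
     else 0)"

lemma poly_F_quotient:
  "poly (F_quotient p k) y = (\<Sum>m\<le>k. if k - m < m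
     then real (k choose m) * (1 - p) ^ m * y ^ (m - 1) * (1 - (1 - p) * y) ^ (k - m) else 0)"
  unfolding F_quotient_def poly_sum
  by (intro sum.cong refl) (simp add: poly_monom algebra_simps)

lemma F_eq_mult_F_quotient: "F p k y = y * poly (F_quotient p k) y"
  unfolding F_def Let_def majority_indices sum.inter_filter[OF finite_atMost]
    poly_F_quotient sum_distrib_left
proof (intro sum.cong refl)
  fix m assume "m \<in> {..k}"
  show "(if k - m < m then real (k choose m) * ((1 - p) * y) ^ m * (1 - (1 - p) * y) ^ (k - m) else 0)
    = y * (if k - m < m
        then real (k choose m) * (1 - p) ^ m * y ^ (m - 1) * (1 - (1 - p) * y) ^ (k - m) else 0)"
  proof (cases "k - m < m")
    case True
    then have "y ^ m = y * y ^ (m - 1)"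
      by (simp add: power_eq_if)
    with True show ?thesis
      by (simp add: power_mult_distrib)
  qed simp
qed

lemma poly_F_quotient_0: "k \<ge> 3 \<Longrightarrow> poly (F_quotient p k) 0 = 0"
  unfolding poly_F_quotient by (intro sum.neutral) auto

lemma continuous_bounded_away_from_one:
  fixes H :: "real \<Rightarrow> real"
  assumes "continuous_on {0..c} H" "H 0 < 1" "\<And>y. 0 < y \<Longrightarrow> y \<le> c \<Longrightarrow> H y \<noteq> 1"
  shows "\<exists>\<epsilon>>0. \<forall>y\<in>{0..c}. H y \<le> 1 - \<epsilon>"
proof (cases "0 \<le> c")
  case True
  have below_one: "H y < 1" if y: "y \<in> {0..c}" for y
  proof (rule ccontr)
    assume "\<not> H y < 1"
    moreover have "continuous_on {0..y} H"
      using assms(1) y by (auto intro: continuous_on_subset)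
    ultimately obtain z where "0 \<le> z" "z \<le> y" "H z = 1"
      using IVT'[of H 0 1 y] assms(2) y by auto
    then show False
      using assms(2,3) y by (cases "z = 0") auto
  qed
  obtain y0 where "y0 \<in> {0..c}" and max: "\<forall>y\<in>{0..c}. H y \<le> H y0"
    using continuous_attains_sup[OF compact_Icc _ assms(1)] True by auto
  then show ?thesis
    using below_one by (intro exI[of _ "1 - H y0"]) auto
qed (auto intro: exI[of _ 1])

lemma F_contracts_below_phi_minus:
  assumes "k \<ge> 3" "\<eta> > 0"
  shows "\<exists>\<epsilon>>0. \<epsilon> \<le> 1 \<and> (\<forall>y\<in>{0..min 1 (phi_minus p k - \<eta>)}. F p k y \<le> (1 - \<epsilon>) * y)"
proof -
  define Q where "Q = F_quotient p k"
  define S where "S = fixpts p k - {0}"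
  have Q0: "poly Q 0 = 0"
    unfolding Q_def using poly_F_quotient_0[OF assms(1)] .
  have "S \<subseteq> {y. poly (Q - 1) y = 0}"
    unfolding S_def fixpts_def Q_def using F_eq_mult_F_quotient[of p k] by auto
  moreover have "Q - 1 \<noteq> 0"
  proof
    assume "Q - 1 = 0"
    then show False
      using arg_cong[of "Q - 1" 0 "\<lambda>P. poly P 0"] Q0 by simp
  qed
  ultimately have "finite S"
    using poly_roots_finite finite_subset by blast
  \<comment> \<open>If \<open>S = {}\<close>, then \<open>phi_minus p k = Min {}\<close> is unspecified and only \<open>y \<le> 1\<close> bounds \<open>y\<close>.\<close>
  define c where "c = (if S = {} then 1 else min 1 (Min S - \<eta>))"
  have no_fixpoint: "poly Q y \<noteq> 1" if "0 < y" "y \<le> c" for y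
  proof
    assume "poly Q y = 1"
    then have "y \<in> S"
      using that F_eq_mult_F_quotient[of p k y] unfolding S_def fixpts_def Q_def c_def
      by (auto split: if_splits)
    then have "S \<noteq> {}" "Min S \<le> y"
      using \<open>finite S\<close> by auto
    then show False
      using that assms(2) unfolding c_def by auto
  qed
  have "continuous_on {0..c} (poly Q)"
    by (intro continuous_intros)
  then obtain \<epsilon> where "\<epsilon> > 0" and gap: "\<forall>y\<in>{0..c}. poly Q y \<le> 1 - \<epsilon>"
    using continuous_bounded_away_from_one[of c "poly Q"] Q0 no_fixpoint by auto
  have "F p k y \<le> (1 - min \<epsilon> 1) * y" if "y \<in> {0..min 1 (phi_minus p k - \<eta>)}" for y
  proof -
    have "y \<in> {0..c}"
      using that by (auto simp: c_def phi_minus_def S_def)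
    then have "poly Q y \<le> 1 - min \<epsilon> 1"
      using gap by fastforce
    then show ?thesis
      using that mult_left_mono[of "poly Q y" "1 - min \<epsilon> 1" y]
      by (simp add: F_eq_mult_F_quotient Q_def mult.commute)
  qed
  then show ?thesis
    using \<open>\<epsilon> > 0\<close> by (intro exI[of _ "min \<epsilon> 1"]) auto
qed

interpretation pmf_as_function .

lemma bernoulli_pmf_clamp: "bernoulli_pmf p = bernoulli_pmf (min 1 (max 0 p))"
  by transfer auto

lemma seen_R_noise_clamp: "seen_R V E p x u n = seen_R V E (min 1 (max 0 p)) x u n"
  by (induction n) (simp_all add: bernoulli_pmf_clamp[of p, symmetric])

lemma edge_majority_step_noise_clamp:
  "edge_majority_step V E k p x = edge_majority_step V E k (min 1 (max 0 p)) x"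
  unfolding edge_majority_step_def node_update_def seen_R_noise_clamp[of V E p] ..

lemma phi_nonneg: "0 \<le> phi V E x u"
  by (simp add: phi_def)

lemma phi_le_one: "phi V E x u \<le> 1"
proof (cases "finite (nbhd V E u)")
  case True
  then have "card {v \<in> nbhd V E u. x v} \<le> card (nbhd V E u)"
    by (intro card_mono) auto
  then show ?thesis
    unfolding phi_def by (cases "card (nbhd V E u) = 0") auto
qed (simp add: phi_def)

lemma noisy_phi_in_unit_interval: "0 \<le> p \<Longrightarrow> p \<le> 1 \<Longrightarrow> (1 - p) * phi V E x u \<in> {0..1}"
  using phi_nonneg[of V E x u] phi_le_one[of V E x u] by (simp add: mult_le_one)

lemma phi_le_phi_max: "finite V \<Longrightarrow> v \<in> V \<Longrightarrow> phi V E x v \<le> phi_max V E x"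
  unfolding phi_max_def by (rule Max_ge) auto

lemma noisy_sample_pmf_of_set:
  assumes "finite N" "N \<noteq> {}" "0 \<le> p" "p \<le> 1"
  shows "pmf_of_set N \<bind> (\<lambda>v. bernoulli_pmf p \<bind> (\<lambda>noisy. return_pmf (\<not> noisy \<and> x v)))
       = bernoulli_pmf ((1 - p) * (card {v \<in> N. x v} / card N))"
    (is "?sample = bernoulli_pmf ?q")
proof -
  have "card {v \<in> N. x v} \<le> card N" "card N > 0"
    using assms(1,2) by (auto intro: card_mono simp: card_gt_0_iff)
  then have "card {v \<in> N. x v} / card N \<in> {0..1}"
    by simp
  then have q: "?q \<in> {0..1}"
    using assms(3,4) by (simp add: mult_le_one del: times_divide_eq_right)
  have sample_True: "pmf ?sample True = ?q"
  proof -
    have "pmf (bernoulli_pmf p \<bind> (\<lambda>noisy. return_pmf (\<not> noisy \<and> x v))) True = (if x v then 1 - p else 0)"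
      for v using assms(3,4) by (simp add: pmf_bind indicator_def)
    moreover have "(\<Sum>v\<in>N. if x v then 1 - p else 0) = (1 - p) * card {v \<in> N. x v}"
      using assms(1) by (simp add: sum.If_cases Int_def)
    ultimately show ?thesis
      using assms(1,2) by (simp add: pmf_bind_pmf_of_set)
  qed
  show ?thesis
  proof (rule pmf_eqI)
    fix b
    show "pmf ?sample b = pmf (bernoulli_pmf ?q) b"
      using q sample_True by (cases b) (simp_all add: pmf_False_conv_True)
  qed
qed

lemma seen_R_binomial:
  assumes "finite V" "nbhd V E u \<noteq> {}" "0 \<le> p" "p \<le> 1"
  shows "seen_R V E p x u n = binomial_pmf n ((1 - p) * phi V E x u)"
proof -
  define q where "q = (1 - p) * phi V E x u"
  have q: "q \<in> {0..1}"
    unfolding q_def using assms(3,4) by (rule noisy_phi_in_unit_interval)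
  have "finite (nbhd V E u)"
    using assms(1) by (simp add: nbhd_def)
  show ?thesis
    unfolding q_def[symmetric]
  proof (induction n)
    case 0
    then show ?case by (simp add: binomial_pmf_0[OF q])
  next
    case (Suc n)
    have "seen_R V E p x u (Suc n) = seen_R V E p x u n \<bind> (\<lambda>c. map_pmf (\<lambda>b. if b then Suc c else c)
        (pmf_of_set (nbhd V E u) \<bind> (\<lambda>v. bernoulli_pmf p \<bind> (\<lambda>noisy. return_pmf (\<not> noisy \<and> x v)))))"
      by (simp add: map_bind_pmf map_return_pmf if_distrib)
    also have "\<dots> = binomial_pmf n q \<bind> (\<lambda>c. map_pmf (\<lambda>b. if b then Suc c else c) (bernoulli_pmf q))"
      by (simp add: Suc noisy_sample_pmf_of_set[OF \<open>finite (nbhd V E u)\<close> assms(2-4)] q_def phi_def)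
    also have "\<dots> = binomial_pmf (Suc n) q"
      using q by (simp add: binomial_pmf_Suc map_pmf_def bind_commute_pmf[of "bernoulli_pmf q"] if_distrib,
          intro bind_pmf_cong refl, auto)
    finally show ?case .
  qed
qed

lemma expectation_node_update:
  assumes "finite V" "nbhd V E v \<noteq> {}" "0 \<le> p" "p \<le> 1"
  shows "measure_pmf.expectation (node_update V E k p x v) of_bool = F p k (phi V E x v)"
  unfolding node_update_def seen_R_binomial[OF assms] integral_map_pmf
  by (rule F_as_binomial_expectation[symmetric, OF noisy_phi_in_unit_interval[OF assms(3,4)]])

lemma expectation_phi_edge_majority_step:
  assumes "simple_graph V E" "no_isolated V E" "u \<in> V" "0 \<le> p" "p \<le> 1"
  shows "measure_pmf.expectation (edge_majority_step V E k p x) (\<lambda>y. phi V E y u)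
    = (\<Sum>v\<in>nbhd V E u. F p k (phi V E x v)) / card (nbhd V E u)"
proof -
  define N where "N = nbhd V E u"
  have "finite V"
    using assms(1) by (simp add: simple_graph_def)
  then have "finite N"
    by (simp add: N_def nbhd_def)
  have phi_as_sum: "phi V E y u = (\<Sum>v\<in>N. of_bool (y v)) / card N" for y
    using \<open>finite N\<close> by (simp add: phi_def N_def sum.If_cases Int_def)
  have marginal: "measure_pmf.expectation (edge_majority_step V E k p x) (\<lambda>y. of_bool (y v))
      = F p k (phi V E x v)" if "v \<in> N" for v
  proof -
    have "v \<in> V" "nbhd V E v \<noteq> {}"
      using that assms(2) by (auto simp: N_def nbhd_def no_isolated_def)
    have "measure_pmf.expectation (edge_majority_step V E k p x) (\<lambda>y. of_bool (y v) :: real)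
        = measure_pmf.expectation (map_pmf (\<lambda>y. y v) (edge_majority_step V E k p x)) of_bool"
      by (rule integral_map_pmf[symmetric])
    also have "\<dots> = measure_pmf.expectation (node_update V E k p x v) of_bool"
      unfolding edge_majority_step_def Pi_pmf_component[OF \<open>finite V\<close>] using \<open>v \<in> V\<close> by simp
    also have "\<dots> = F p k (phi V E x v)"
      using expectation_node_update \<open>finite V\<close> \<open>nbhd V E v \<noteq> {}\<close> assms(4,5) .
    finally show ?thesis .
  qed
  have "integrable (measure_pmf M) (\<lambda>y. of_bool (y v) :: real)" for M :: "('a \<Rightarrow> bool) pmf" and v
    by (intro measure_pmf.integrable_const_bound[of _ 1]) auto
  then have "measure_pmf.expectation (edge_majority_step V E k p x) (\<lambda>y. phi V E y u)
      = (\<Sum>v\<in>N. measure_pmf.expectation (edge_majority_step V E k p x) (\<lambda>y. of_bool (y v))) / card N"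
    unfolding phi_as_sum by simp
  also have "\<dots> = (\<Sum>v\<in>N. F p k (phi V E x v)) / card N"
    using marginal by simp
  finally show ?thesis
    unfolding N_def .
qed

lemma expectation_phi_edge_majority_step_le:
  assumes "simple_graph V E" "no_isolated V E" "u \<in> V" "0 \<le> p" "p \<le> 1" "0 \<le> c"
    and "\<And>v. v \<in> V \<Longrightarrow> F p k (phi V E x v) \<le> c * phi V E x v"
  shows "measure_pmf.expectation (edge_majority_step V E k p x) (\<lambda>y. phi V E y u) \<le> c * phi_max V E x"
proof -
  define N where "N = nbhd V E u"
  have "finite V" "N \<subseteq> V" "N \<noteq> {}"
    using assms(1-3) by (auto simp: simple_graph_def no_isolated_def N_def nbhd_def)
  have "F p k (phi V E x v) \<le> c * phi_max V E x" if "v \<in> N" for v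
  proof -
    have "v \<in> V"
      using that \<open>N \<subseteq> V\<close> by blast
    then have "F p k (phi V E x v) \<le> c * phi V E x v"
      by (rule assms(7))
    also have "\<dots> \<le> c * phi_max V E x"
      using phi_le_phi_max[OF \<open>finite V\<close> \<open>v \<in> V\<close>] assms(6) by (rule mult_left_mono)
    finally show ?thesis .
  qed
  then have "(\<Sum>v\<in>N. F p k (phi V E x v)) \<le> card N * (c * phi_max V E x)"
    by (rule sum_bounded_above)
  moreover have "card N > 0"
    using \<open>finite V\<close> \<open>N \<subseteq> V\<close> \<open>N \<noteq> {}\<close> by (simp add: card_gt_0_iff finite_subset)
  ultimately show ?thesis
    unfolding expectation_phi_edge_majority_step[OF assms(1-5)] N_def[symmetric]
    by (simp add: divide_le_eq mult.commute)
qed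

lemma expectation_phi_edge_majority_step_saturated:
  assumes "simple_graph V E" "no_isolated V E" "u \<in> V" "1 \<le> p"
  shows "measure_pmf.expectation (edge_majority_step V E k p x) (\<lambda>y. phi V E y u) = 0"
proof -
  have "edge_majority_step V E k p x = edge_majority_step V E k 1 x"
    using edge_majority_step_noise_clamp[of V E k p x] assms(4) by simp
  then show ?thesis
    using expectation_phi_edge_majority_step[OF assms(1-3), of 1 k x] by (simp add: F_full_noise)
qed

theorem lemma5p13:
  fixes k :: nat and p \<eta> :: real
  assumes "odd k" and "k \<ge> 3" and "0 \<le> p" and "p \<le> p_star k" and "\<eta> > 0"
  shows "\<exists>\<epsilon>>0. \<forall>(V :: 'a set) E x u.
           simple_graph V E \<and> no_isolated V E \<and>
           phi_max V E x \<le> phi_minus p k - \<eta> \<and> u \<in> V \<longrightarrow>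
           measure_pmf.expectation (edge_majority_step V E k p x) (\<lambda>y. phi V E y u)
             \<le> (1 - \<epsilon>) * phi_max V E x"
proof (cases "p \<le> 1")
  case True
  obtain \<epsilon> where "\<epsilon> > 0" "\<epsilon> \<le> 1"
    and contraction: "\<forall>y\<in>{0..min 1 (phi_minus p k - \<eta>)}. F p k y \<le> (1 - \<epsilon>) * y"
    using F_contracts_below_phi_minus[OF assms(2,5)] by blast
  have "measure_pmf.expectation (edge_majority_step V E k p x) (\<lambda>y. phi V E y u)
      \<le> (1 - \<epsilon>) * phi_max V E x"
    if "simple_graph V E" "no_isolated V E" "phi_max V E x \<le> phi_minus p k - \<eta>" "u \<in> V"
    for V :: "'a set" and E x u
  proof (rule expectation_phi_edge_majority_step_le)
    fix v assume "v \<in> V"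
    then have "phi V E x v \<in> {0..min 1 (phi_minus p k - \<eta>)}"
      using that phi_le_phi_max[of V v E x] phi_nonneg[of V E x v] phi_le_one[of V E x v]
      by (auto simp: simple_graph_def)
    then show "F p k (phi V E x v) \<le> (1 - \<epsilon>) * phi V E x v"
      using contraction by blast
  qed (use that True assms(3) \<open>\<epsilon> \<le> 1\<close> in auto)
  then show ?thesis
    using \<open>\<epsilon> > 0\<close> by blast
next
  case False
  \<comment> \<open>Possible since \<open>p_star k\<close> is a \<open>THE\<close>-term; \<open>bernoulli_pmf\<close> clamps \<open>p\<close> to 1, so every sample is seen as B.\<close>
  then have "1 \<le> p"
    by simp
  then show ?thesis
    by (intro exI[of _ 1]) (auto simp: expectation_phi_edge_majority_step_saturated)
qed

end
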